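(* For every $N\ge1$, the (free) Magnetic Tower of Hanoi puzzle with $N$ disks can be solved in $S_{62}(N)$ moves, where $S_{62}(N)=3^{N-1}+N-1$ for $N\le3$, and for $N>3$ $$S_{62}(N)=2S_{100}(N-2)+2S_{100}(N-3)+S_{67}(N-1)+S_{67}(N-2)+S_{SF}(N-3)+4,$$ with $S_{100}(n)=\frac{3^n-1}{2}$, $S_{67}(n)=3^{n-1}+n-1$, and $S_{SF}(n)=(3^{n-1}+n-1)+\frac{3^{n-1}-1}{8}-\frac{n-1}{2}$ for $n$ odd, $S_{SF}(n)=(3^{n-1}+n-1)+\frac{3^{n-1}-3}{8}-\frac{n-2}{2}$ for $n$ even. Moreover $$\frac{S_{62}(N)}{(3^N-1)/2}\longrightarrow\frac{67}{108}\quad (N\to\infty).$$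
   Context: Magnetic Tower of Hanoi (MToH): there are three posts and $N$ disks of distinct diameters, numbered $1$ (largest) to $N$ (smallest). Each disk has two faces, one Red and one Blue. Initially all $N$ disks are stacked on a source post $S$ in decreasing size from bottom to top, each with its Red face up. A move consists of lifting the top disk of some post, turning it upside down, and placing it on top of another post. Rules: (Size rule) a disk may never be placed on a smaller disk; (Magnet rule) a disk may never be placed so that its downward-facing side has the same color as the upward-facing side of the disk it lands on. An empty post accepts a disk in either orientation. The puzzle is solved when all $N$ disks are on a destination post $D$ (one of the two initially empty posts) in decreasing size from bottom to top. *)

theory Defs
  imports Complex_Main
begin

text \<open>Posts are 0, 1, 2 (post 0 is the source S). A configuration maps each post to the
list of disks on it, listed from TOP to BOTTOM; each entry is (disk number, upward colour),
where disk 1 is the largest and disk N the smallest, and the colour True means Red face up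
(so Blue face down), False means Blue face up (Red face down).\<close>

type_synonym config = "nat \<Rightarrow> (nat \<times> bool) list"

text \<open>A legal move from post p to post q: lift the top disk of p, turn it upside down
(its old upward colour becomes its downward colour) and put it on q, respecting the size
rule (only on a larger disk, i.e. one with smaller number) and the magnet rule (the downward
colour of the moved disk must differ from the upward colour of the disk it lands on).\<close>

definition move_ok :: "config \<Rightarrow> nat \<Rightarrow> nat \<Rightarrow> bool" where
  "move_ok c p q \<longleftrightarrow> p < 3 \<and> q < 3 \<and> p \<noteq> q \<and> c p \<noteq> [] \<and>
     (case c q of [] \<Rightarrow> True
      | (e, u') # _ \<Rightarrow> e < fst (hd (c p)) \<and> snd (hd (c p)) \<noteq> u')"

definition apply_move :: "config \<Rightarrow> nat \<Rightarrow> nat \<Rightarrow> config" where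
  "apply_move c p q = c(p := tl (c p), q := (fst (hd (c p)), \<not> snd (hd (c p))) # c q)"

fun run :: "config \<Rightarrow> (nat \<times> nat) list \<Rightarrow> config option" where
  "run c [] = Some c"
| "run c ((p, q) # ms) = (if move_ok c p q then run (apply_move c p q) ms else None)"

definition initial_config :: "nat \<Rightarrow> config" where
  "initial_config N = (\<lambda>p. if p = 0 then map (\<lambda>i. (i, True)) (rev [1..<N+1]) else [])"

definition solved :: "nat \<Rightarrow> nat \<Rightarrow> config \<Rightarrow> bool" where
  "solved N D c \<longleftrightarrow> map fst (c D) = rev [1..<N+1] \<and> (\<forall>p. p \<noteq> D \<longrightarrow> c p = [])"

definition solves_in :: "nat \<Rightarrow> nat \<Rightarrow> nat \<Rightarrow> bool" where
  "solves_in N D k \<longleftrightarrow> (\<exists>ms c. length ms = k \<and> run (initial_config N) ms = Some c \<and> solved N D c)"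

definition S100 :: "nat \<Rightarrow> real" where
  "S100 n = (3 ^ n - 1) / 2"

definition S67 :: "nat \<Rightarrow> real" where
  "S67 n = 3 ^ (n - 1) + real n - 1"

definition SSF :: "nat \<Rightarrow> real" where
  "SSF n = (if odd n then (3 ^ (n - 1) + real n - 1) + (3 ^ (n - 1) - 1) / 8 - (real n - 1) / 2
            else (3 ^ (n - 1) + real n - 1) + (3 ^ (n - 1) - 3) / 8 - (real n - 2) / 2)"

definition S62 :: "nat \<Rightarrow> real" where
  "S62 N = (if N \<le> 3 then 3 ^ (N - 1) + real N - 1
            else 2 * S100 (N - 2) + 2 * S100 (N - 3) + S67 (N - 1) + S67 (N - 2) + SSF (N - 3) + 4)"

end

theory Submission
  imports Defs "HOL-Real_Asymp.Real_Asymp"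
begin

text \<open>By the magnet rule every stack shows a single upward colour, so the puzzle is about moving
monochrome towers. A tower can be carried between posts by recursive procedures that peel off
its bottom disk; which procedure applies depends on whether the target and the spare post are
empty or topped by a larger disk of a suitable colour, and on whether the source holds nothing
but the tower. The procedures call each other on the remaining tower, so their move counts obey
linear recurrences. The solution sends the top N-1 disks to the intermediate post, the largest
disk to D, and the N-1 disks onto it; the recurrences give S62(N), which is
201/8 \<cdot> 3^(N-4) up to a linearly growing error, whence the limit 67/108.\<close>

section \<open>Moving monochrome towers\<close>

definition tower :: "nat \<Rightarrow> nat \<Rightarrow> bool \<Rightarrow> (nat \<times> bool) list" where
  "tower k m s = map (\<lambda>i. (i, s)) (rev [Suc k..<Suc (k + m)])"

text \<open>A disk numbered above k that lands with upward colour s may be placed on L.\<close>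

definition accepts :: "nat \<Rightarrow> bool \<Rightarrow> (nat \<times> bool) list \<Rightarrow> bool" where
  "accepts k s L \<longleftrightarrow> (case L of [] \<Rightarrow> True | (e, u) # _ \<Rightarrow> e \<le> k \<and> u = s)"

lemma tower_0 [simp]: "tower k 0 s = []"
  by (simp add: tower_def)

lemma tower_Suc: "tower k (Suc m) s = tower (Suc k) m s @ [(Suc k, s)]"
  by (simp add: tower_def upt_conv_Cons)

lemma accepts_Nil [simp]: "accepts k s []"
  by (simp add: accepts_def)

lemma accepts_Cons [simp]: "accepts k s ((e, u) # L) \<longleftrightarrow> e \<le> k \<and> u = s"
  by (simp add: accepts_def)

lemma accepts_Suc: "accepts k s L \<Longrightarrow> accepts (Suc k) s L"
  by (auto simp: accepts_def split: list.splits)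

lemma run_appendI:
  "run c xs = Some c' \<Longrightarrow> c' = c'' \<Longrightarrow> run c (xs @ ys) = run c'' ys"
  by (induction c xs rule: run.induct) (auto split: if_splits)

lemma run_move:
  assumes "p < 3" "q < 3" "p \<noteq> q" "cf p = (Suc k, u) # L" "accepts k (\<not> u) (cf q)"
    and "cf(p := L, q := (Suc k, \<not> u) # cf q) = cf'"
  shows "run cf ((p, q) # ms) = run cf' ms"
proof -
  have "move_ok cf p q"
    using assms by (auto simp: move_ok_def accepts_def split: list.splits)
  moreover have "apply_move cf p q = cf'"
    using assms by (simp add: apply_move_def)
  ultimately show ?thesis by simp
qed

abbreviation distinct_posts :: "nat \<Rightarrow> nat \<Rightarrow> nat \<Rightarrow> bool" where
  "distinct_posts a b c \<equiv> a < 3 \<and> b < 3 \<and> c < 3 \<and> a \<noteq> b \<and> a \<noteq> c \<and> b \<noteq> c"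

text \<open>Naming of the procedures below, which move a tower of upward colour s from post a to post
b using the spare post c: keep/flip tells the upward colour of the tower on arrival; the two
capitals describe the target and the spare post, S = accepts s, O = accepts \<not> s, F = empty;
the suffix clear means the source holds only the tower.\<close>

fun keep_SO :: "nat \<Rightarrow> nat \<Rightarrow> nat \<Rightarrow> nat \<Rightarrow> (nat \<times> nat) list" where
  "keep_SO 0 a b c = []"
| "keep_SO (Suc m) a b c = keep_SO m a b c @ (a, c) # keep_SO m b a c @ (c, b) # keep_SO m a b c"

lemma run_keep_SO:
  assumes "distinct_posts a b c" "cf a = tower k m s @ LA" "accepts k s LA"
    "accepts k s (cf b)" "accepts k (\<not> s) (cf c)"
  shows "run cf (keep_SO m a b c) = Some (cf(a := LA, b := tower k m s @ cf b))"
  using assms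
proof (induction m arbitrary: k a b c cf LA)
  case 0
  then show ?case by (simp add: fun_upd_idem)
next
  case (Suc m)
  note P = Suc.prems
  let ?T = "tower (Suc k) m s"
  have "run cf (keep_SO (Suc m) a b c)
      = run cf (keep_SO m a b c @ (a, c) # keep_SO m b a c @ (c, b) # keep_SO m a b c)" by simp
  also have "\<dots> = run (cf(a := (Suc k, s) # LA, b := ?T @ cf b))
                     ((a, c) # keep_SO m b a c @ (c, b) # keep_SO m a b c)"
    by (rule run_appendI, rule Suc.IH[where k="Suc k" and LA="(Suc k, s) # LA"])
       (use P in \<open>auto simp: tower_Suc accepts_Suc\<close>)
  also have "\<dots> = run (cf(a := LA, b := ?T @ cf b, c := (Suc k, \<not> s) # cf c))
                     (keep_SO m b a c @ (c, b) # keep_SO m a b c)"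
    by (rule run_move[where k=k]) (use P in \<open>auto simp: fun_upd_twist\<close>)
  also have "\<dots> = run (cf(a := ?T @ LA, c := (Suc k, \<not> s) # cf c)) ((c, b) # keep_SO m a b c)"
    by (rule run_appendI, rule Suc.IH[where k="Suc k" and LA="cf b"])
       (use P in \<open>auto simp: accepts_Suc fun_eq_iff\<close>)
  also have "\<dots> = run (cf(a := ?T @ LA, b := (Suc k, s) # cf b)) (keep_SO m a b c)"
    by (rule run_move[where k=k]) (use P in \<open>auto simp: fun_eq_iff\<close>)
  also have "\<dots> = Some (cf(a := LA, b := tower k (Suc m) s @ cf b))"
    by (rule trans, rule Suc.IH[where k="Suc k" and LA=LA])
       (use P in \<open>auto simp: accepts_Suc fun_eq_iff tower_Suc\<close>)
  finally show ?case .
qed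

fun flip_OO :: "nat \<Rightarrow> nat \<Rightarrow> nat \<Rightarrow> nat \<Rightarrow> (nat \<times> nat) list" where
  "flip_OO 0 a b c = []"
| "flip_OO (Suc m) a b c = flip_OO m a c b @ (a, b) # keep_SO m c b a"

lemma run_flip_OO:
  assumes "distinct_posts a b c" "cf a = tower k m s @ LA" "accepts k s LA"
    "accepts k (\<not> s) (cf b)" "accepts k (\<not> s) (cf c)"
  shows "run cf (flip_OO m a b c) = Some (cf(a := LA, b := tower k m (\<not> s) @ cf b))"
  using assms
proof (induction m arbitrary: k a b c cf LA)
  case 0
  then show ?case by (simp add: fun_upd_idem)
next
  case (Suc m)
  note P = Suc.prems
  let ?T' = "tower (Suc k) m (\<not> s)"
  have "run cf (flip_OO (Suc m) a b c) = run cf (flip_OO m a c b @ (a, b) # keep_SO m c b a)"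
    by simp
  also have "\<dots> = run (cf(a := (Suc k, s) # LA, c := ?T' @ cf c)) ((a, b) # keep_SO m c b a)"
    by (rule run_appendI, rule Suc.IH[where k="Suc k" and LA="(Suc k, s) # LA"])
       (use P in \<open>auto simp: tower_Suc accepts_Suc\<close>)
  also have "\<dots> = run (cf(a := LA, b := (Suc k, \<not> s) # cf b, c := ?T' @ cf c)) (keep_SO m c b a)"
    by (rule run_move[where k=k]) (use P in \<open>auto simp: fun_upd_twist\<close>)
  also have "\<dots> = Some (cf(a := LA, b := tower k (Suc m) (\<not> s) @ cf b))"
    by (rule trans, rule run_keep_SO[where k="Suc k" and LA="cf c"])
       (use P in \<open>auto simp: accepts_Suc fun_eq_iff tower_Suc\<close>)
  finally show ?case .
qed

fun flip_OS :: "nat \<Rightarrow> nat \<Rightarrow> nat \<Rightarrow> nat \<Rightarrow> (nat \<times> nat) list" where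
  "flip_OS 0 a b c = []"
| "flip_OS (Suc m) a b c = keep_SO m a c b @ (a, b) # flip_OS m c b a"

lemma run_flip_OS:
  assumes "distinct_posts a b c" "cf a = tower k m s @ LA" "accepts k s LA"
    "accepts k (\<not> s) (cf b)" "accepts k s (cf c)"
  shows "run cf (flip_OS m a b c) = Some (cf(a := LA, b := tower k m (\<not> s) @ cf b))"
  using assms
proof (induction m arbitrary: k a b c cf LA)
  case 0
  then show ?case by (simp add: fun_upd_idem)
next
  case (Suc m)
  note P = Suc.prems
  let ?T = "tower (Suc k) m s"
  have "run cf (flip_OS (Suc m) a b c) = run cf (keep_SO m a c b @ (a, b) # flip_OS m c b a)"
    by simp
  also have "\<dots> = run (cf(a := (Suc k, s) # LA, c := ?T @ cf c)) ((a, b) # flip_OS m c b a)"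
    by (rule run_appendI, rule run_keep_SO[where k="Suc k" and LA="(Suc k, s) # LA"])
       (use P in \<open>auto simp: tower_Suc accepts_Suc\<close>)
  also have "\<dots> = run (cf(a := LA, b := (Suc k, \<not> s) # cf b, c := ?T @ cf c)) (flip_OS m c b a)"
    by (rule run_move[where k=k]) (use P in \<open>auto simp: fun_upd_twist\<close>)
  also have "\<dots> = Some (cf(a := LA, b := tower k (Suc m) (\<not> s) @ cf b))"
    by (rule trans, rule Suc.IH[where k="Suc k" and LA="cf c"])
       (use P in \<open>auto simp: accepts_Suc fun_eq_iff tower_Suc\<close>)
  finally show ?case .
qed

fun keep_SO_clear :: "nat \<Rightarrow> nat \<Rightarrow> nat \<Rightarrow> nat \<Rightarrow> (nat \<times> nat) list" where
  "keep_SO_clear 0 a b c = []"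
| "keep_SO_clear (Suc m) a b c = keep_SO m a b c @ (a, c) # flip_OO m b a c @ (c, b) # flip_OS m a b c"

lemma run_keep_SO_clear:
  assumes "distinct_posts a b c" "cf a = tower k m s"
    "accepts k s (cf b)" "accepts k (\<not> s) (cf c)"
  shows "run cf (keep_SO_clear m a b c) = Some (cf(a := [], b := tower k m s @ cf b))"
proof (cases m)
  case 0
  then show ?thesis using assms by (simp add: fun_upd_idem)
next
  case (Suc j)
  note P = assms
  let ?T = "tower (Suc k) j s"
  let ?T' = "tower (Suc k) j (\<not> s)"
  have "run cf (keep_SO_clear m a b c)
      = run cf (keep_SO j a b c @ (a, c) # flip_OO j b a c @ (c, b) # flip_OS j a b c)"
    using Suc by simp
  also have "\<dots> = run (cf(a := [(Suc k, s)], b := ?T @ cf b))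
                     ((a, c) # flip_OO j b a c @ (c, b) # flip_OS j a b c)"
    by (rule run_appendI, rule run_keep_SO[where k="Suc k" and LA="[(Suc k, s)]"])
       (use P Suc in \<open>auto simp: tower_Suc accepts_Suc\<close>)
  also have "\<dots> = run (cf(a := [], b := ?T @ cf b, c := (Suc k, \<not> s) # cf c))
                     (flip_OO j b a c @ (c, b) # flip_OS j a b c)"
    by (rule run_move[where k=k]) (use P in \<open>auto simp: fun_upd_twist\<close>)
  also have "\<dots> = run (cf(a := ?T', c := (Suc k, \<not> s) # cf c)) ((c, b) # flip_OS j a b c)"
    by (rule run_appendI, rule run_flip_OO[where k="Suc k" and LA="cf b"])
       (use P in \<open>auto simp: accepts_Suc fun_eq_iff\<close>)
  also have "\<dots> = run (cf(a := ?T', b := (Suc k, s) # cf b)) (flip_OS j a b c)"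
    by (rule run_move[where k=k]) (use P in \<open>auto simp: fun_eq_iff\<close>)
  also have "\<dots> = Some (cf(a := [], b := tower k m s @ cf b))"
    by (rule trans, rule run_flip_OS[where k="Suc k" and LA="[]"])
       (use P Suc in \<open>auto simp: accepts_Suc fun_eq_iff tower_Suc\<close>)
  finally show ?thesis .
qed

fun keep_FO :: "nat \<Rightarrow> nat \<Rightarrow> nat \<Rightarrow> nat \<Rightarrow> (nat \<times> nat) list" where
  "keep_FO 0 a b c = []"
| "keep_FO (Suc m) a b c = flip_OO m a b c @ (a, c) # flip_OS m b a c @ (c, b) # keep_SO m a b c"

lemma run_keep_FO:
  assumes "distinct_posts a b c" "cf a = tower k m s @ LA" "accepts k s LA"
    "cf b = []" "accepts k (\<not> s) (cf c)"
  shows "run cf (keep_FO m a b c) = Some (cf(a := LA, b := tower k m s))"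
proof (cases m)
  case 0
  then show ?thesis using assms by (simp add: fun_upd_idem)
next
  case (Suc j)
  note P = assms
  let ?T = "tower (Suc k) j s"
  let ?T' = "tower (Suc k) j (\<not> s)"
  have "run cf (keep_FO m a b c)
      = run cf (flip_OO j a b c @ (a, c) # flip_OS j b a c @ (c, b) # keep_SO j a b c)"
    using Suc by simp
  also have "\<dots> = run (cf(a := (Suc k, s) # LA, b := ?T'))
                     ((a, c) # flip_OS j b a c @ (c, b) # keep_SO j a b c)"
    by (rule run_appendI, rule run_flip_OO[where k="Suc k" and LA="(Suc k, s) # LA"])
       (use P Suc in \<open>auto simp: tower_Suc accepts_Suc\<close>)
  also have "\<dots> = run (cf(a := LA, b := ?T', c := (Suc k, \<not> s) # cf c))
                     (flip_OS j b a c @ (c, b) # keep_SO j a b c)"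
    by (rule run_move[where k=k]) (use P in \<open>auto simp: fun_upd_twist\<close>)
  also have "\<dots> = run (cf(a := ?T @ LA, c := (Suc k, \<not> s) # cf c)) ((c, b) # keep_SO j a b c)"
    by (rule run_appendI, rule run_flip_OS[where k="Suc k" and LA="[]"])
       (use P in \<open>auto simp: accepts_Suc fun_eq_iff\<close>)
  also have "\<dots> = run (cf(a := ?T @ LA, b := [(Suc k, s)])) (keep_SO j a b c)"
    by (rule run_move[where k=k]) (use P in \<open>auto simp: fun_eq_iff\<close>)
  also have "\<dots> = Some (cf(a := LA, b := tower k m s))"
    by (rule trans, rule run_keep_SO[where k="Suc k" and LA=LA])
       (use P Suc in \<open>auto simp: accepts_Suc fun_eq_iff tower_Suc\<close>)
  finally show ?thesis .
qed

fun flip_FF :: "nat \<Rightarrow> nat \<Rightarrow> nat \<Rightarrow> nat \<Rightarrow> (nat \<times> nat) list" where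
  "flip_FF 0 a b c = []"
| "flip_FF (Suc m) a b c = flip_FF m a c b @ (a, b) # keep_SO_clear m c b a"

lemma run_flip_FF:
  assumes "distinct_posts a b c" "cf a = tower k m s @ LA" "accepts k s LA"
    "cf b = []" "cf c = []"
  shows "run cf (flip_FF m a b c) = Some (cf(a := LA, b := tower k m (\<not> s)))"
  using assms
proof (induction m arbitrary: k a b c cf LA)
  case 0
  then show ?case by (simp add: fun_upd_idem)
next
  case (Suc m)
  note P = Suc.prems
  let ?T' = "tower (Suc k) m (\<not> s)"
  have "run cf (flip_FF (Suc m) a b c) = run cf (flip_FF m a c b @ (a, b) # keep_SO_clear m c b a)"
    by simp
  also have "\<dots> = run (cf(a := (Suc k, s) # LA, c := ?T')) ((a, b) # keep_SO_clear m c b a)"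
    by (rule run_appendI, rule Suc.IH[where k="Suc k" and LA="(Suc k, s) # LA"])
       (use P in \<open>auto simp: tower_Suc accepts_Suc\<close>)
  also have "\<dots> = run (cf(a := LA, b := [(Suc k, \<not> s)], c := ?T')) (keep_SO_clear m c b a)"
    by (rule run_move[where k=k]) (use P in \<open>auto simp: fun_upd_twist\<close>)
  also have "\<dots> = Some (cf(a := LA, b := tower k (Suc m) (\<not> s)))"
    by (rule trans, rule run_keep_SO_clear[where k="Suc k"])
       (use P in \<open>auto simp: accepts_Suc fun_eq_iff tower_Suc\<close>)
  finally show ?case .
qed

fun flip_OF_clear :: "nat \<Rightarrow> nat \<Rightarrow> nat \<Rightarrow> nat \<Rightarrow> (nat \<times> nat) list" where
  "flip_OF_clear 0 a b c = []"
| "flip_OF_clear (Suc m) a b c = keep_FO m a c b @ (a, b) # flip_OF_clear m c b a"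

lemma run_flip_OF_clear:
  assumes "distinct_posts a b c" "cf a = tower k m s"
    "accepts k (\<not> s) (cf b)" "cf c = []"
  shows "run cf (flip_OF_clear m a b c) = Some (cf(a := [], b := tower k m (\<not> s) @ cf b))"
  using assms
proof (induction m arbitrary: k a b c cf)
  case 0
  then show ?case by (simp add: fun_upd_idem)
next
  case (Suc m)
  note P = Suc.prems
  let ?T = "tower (Suc k) m s"
  have "run cf (flip_OF_clear (Suc m) a b c)
      = run cf (keep_FO m a c b @ (a, b) # flip_OF_clear m c b a)"
    by simp
  also have "\<dots> = run (cf(a := [(Suc k, s)], c := ?T)) ((a, b) # flip_OF_clear m c b a)"
    by (rule run_appendI, rule run_keep_FO[where k="Suc k" and LA="[(Suc k, s)]"])
       (use P in \<open>auto simp: tower_Suc accepts_Suc\<close>)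
  also have "\<dots> = run (cf(a := [], b := (Suc k, \<not> s) # cf b, c := ?T)) (flip_OF_clear m c b a)"
    by (rule run_move[where k=k]) (use P in \<open>auto simp: fun_upd_twist\<close>)
  also have "\<dots> = Some (cf(a := [], b := tower k (Suc m) (\<not> s) @ cf b))"
    by (rule trans, rule Suc.IH[where k="Suc k"])
       (use P in \<open>auto simp: accepts_Suc fun_eq_iff tower_Suc\<close>)
  finally show ?case .
qed

fun flip_OF :: "nat \<Rightarrow> nat \<Rightarrow> nat \<Rightarrow> nat \<Rightarrow> (nat \<times> nat) list" where
  "flip_OF 0 a b c = []"
| "flip_OF (Suc 0) a b c = [(a, b)]"
| "flip_OF (Suc (Suc m)) a b c =
     flip_OF m a b c @ (a, c) # keep_SO m b c a @ (a, b) # keep_SO_clear (Suc m) c b a"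

lemma run_flip_OF:
  assumes "distinct_posts a b c" "cf a = tower k m s @ LA" "accepts k s LA"
    "accepts k (\<not> s) (cf b)" "cf c = []"
  shows "run cf (flip_OF m a b c) = Some (cf(a := LA, b := tower k m (\<not> s) @ cf b))"
  using assms
proof (induction m a b c arbitrary: k cf LA rule: flip_OF.induct)
  case (1 a b c)
  then show ?case by (simp add: fun_upd_idem)
next
  case (2 a b c)
  have "run cf (flip_OF (Suc 0) a b c) = run (cf(a := LA, b := tower k (Suc 0) (\<not> s) @ cf b)) []"
    by (simp only: flip_OF.simps, rule run_move[where k=k]) (use "2.prems" in \<open>auto simp: tower_def\<close>)
  then show ?case by (simp only: run.simps(1))
next
  case (3 m a b c)
  note P = "3.prems"
  let ?T' = "tower (Suc (Suc k)) m (\<not> s)"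
  have "run cf (flip_OF (Suc (Suc m)) a b c)
      = run cf (flip_OF m a b c @ (a, c) # keep_SO m b c a @ (a, b) # keep_SO_clear (Suc m) c b a)"
    by simp
  also have "\<dots> = run (cf(a := (Suc (Suc k), s) # (Suc k, s) # LA, b := ?T' @ cf b))
                     ((a, c) # keep_SO m b c a @ (a, b) # keep_SO_clear (Suc m) c b a)"
    by (rule run_appendI, rule "3.IH"[where k="Suc (Suc k)" and LA="(Suc (Suc k), s) # (Suc k, s) # LA"])
       (use P in \<open>auto simp: tower_Suc accepts_Suc\<close>)
  also have "\<dots> = run (cf(a := (Suc k, s) # LA, b := ?T' @ cf b, c := [(Suc (Suc k), \<not> s)]))
                     (keep_SO m b c a @ (a, b) # keep_SO_clear (Suc m) c b a)"
    by (rule run_move[where k="Suc k"]) (use P in \<open>auto simp: fun_upd_twist\<close>)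
  also have "\<dots> = run (cf(a := (Suc k, s) # LA, c := tower (Suc k) (Suc m) (\<not> s)))
                     ((a, b) # keep_SO_clear (Suc m) c b a)"
    by (rule run_appendI, rule run_keep_SO[where k="Suc (Suc k)" and LA="cf b"])
       (use P in \<open>auto simp: accepts_Suc fun_eq_iff tower_Suc\<close>)
  also have "\<dots> = run (cf(a := LA, b := (Suc k, \<not> s) # cf b, c := tower (Suc k) (Suc m) (\<not> s)))
                     (keep_SO_clear (Suc m) c b a)"
    by (rule run_move[where k=k]) (use P in \<open>auto simp: fun_upd_twist\<close>)
  also have "\<dots> = Some (cf(a := LA, b := tower k (Suc (Suc m)) (\<not> s) @ cf b))"
    by (rule trans, rule run_keep_SO_clear[where k="Suc k"])
       (use P in \<open>auto simp: accepts_Suc fun_eq_iff tower_Suc\<close>)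
  finally show ?case .
qed

fun flip_FO :: "nat \<Rightarrow> nat \<Rightarrow> nat \<Rightarrow> nat \<Rightarrow> (nat \<times> nat) list" where
  "flip_FO 0 a b c = []"
| "flip_FO (Suc m) a b c = flip_OF m a c b @ (a, b) # keep_SO m c b a"

lemma run_flip_FO:
  assumes "distinct_posts a b c" "cf a = tower k m s @ LA" "accepts k s LA"
    "cf b = []" "accepts k (\<not> s) (cf c)"
  shows "run cf (flip_FO m a b c) = Some (cf(a := LA, b := tower k m (\<not> s)))"
proof (cases m)
  case 0
  then show ?thesis using assms by (simp add: fun_upd_idem)
next
  case (Suc j)
  note P = assms
  let ?T' = "tower (Suc k) j (\<not> s)"
  have "run cf (flip_FO m a b c) = run cf (flip_OF j a c b @ (a, b) # keep_SO j c b a)"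
    using Suc by simp
  also have "\<dots> = run (cf(a := (Suc k, s) # LA, c := ?T' @ cf c)) ((a, b) # keep_SO j c b a)"
    by (rule run_appendI, rule run_flip_OF[where k="Suc k" and LA="(Suc k, s) # LA"])
       (use P Suc in \<open>auto simp: tower_Suc accepts_Suc\<close>)
  also have "\<dots> = run (cf(a := LA, b := [(Suc k, \<not> s)], c := ?T' @ cf c)) (keep_SO j c b a)"
    by (rule run_move[where k=k]) (use P in \<open>auto simp: fun_upd_twist\<close>)
  also have "\<dots> = Some (cf(a := LA, b := tower k m (\<not> s)))"
    by (rule trans, rule run_keep_SO[where k="Suc k" and LA="cf c"])
       (use P Suc in \<open>auto simp: accepts_Suc fun_eq_iff tower_Suc\<close>)
  finally show ?thesis .
qed

fun keep_SF_clear :: "nat \<Rightarrow> nat \<Rightarrow> nat \<Rightarrow> nat \<Rightarrow> (nat \<times> nat) list" where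
  "keep_SF_clear 0 a b c = []"
| "keep_SF_clear (Suc m) a b c = keep_SO m a b c @ (a, c) # flip_FO m b a c @ (c, b) # flip_OF_clear m a b c"

lemma run_keep_SF_clear:
  assumes "distinct_posts a b c" "cf a = tower k m s"
    "accepts k s (cf b)" "cf c = []"
  shows "run cf (keep_SF_clear m a b c) = Some (cf(a := [], b := tower k m s @ cf b))"
proof (cases m)
  case 0
  then show ?thesis using assms by (simp add: fun_upd_idem)
next
  case (Suc j)
  note P = assms
  let ?T = "tower (Suc k) j s"
  let ?T' = "tower (Suc k) j (\<not> s)"
  have "run cf (keep_SF_clear m a b c)
      = run cf (keep_SO j a b c @ (a, c) # flip_FO j b a c @ (c, b) # flip_OF_clear j a b c)"
    using Suc by simp
  also have "\<dots> = run (cf(a := [(Suc k, s)], b := ?T @ cf b))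
                     ((a, c) # flip_FO j b a c @ (c, b) # flip_OF_clear j a b c)"
    by (rule run_appendI, rule run_keep_SO[where k="Suc k" and LA="[(Suc k, s)]"])
       (use P Suc in \<open>auto simp: tower_Suc accepts_Suc\<close>)
  also have "\<dots> = run (cf(a := [], b := ?T @ cf b, c := [(Suc k, \<not> s)]))
                     (flip_FO j b a c @ (c, b) # flip_OF_clear j a b c)"
    by (rule run_move[where k=k]) (use P in \<open>auto simp: fun_upd_twist\<close>)
  also have "\<dots> = run (cf(a := ?T', c := [(Suc k, \<not> s)])) ((c, b) # flip_OF_clear j a b c)"
    by (rule run_appendI, rule run_flip_FO[where k="Suc k" and LA="cf b"])
       (use P in \<open>auto simp: accepts_Suc fun_eq_iff\<close>)
  also have "\<dots> = run (cf(a := ?T', b := (Suc k, s) # cf b)) (flip_OF_clear j a b c)"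
    by (rule run_move[where k=k]) (use P in \<open>auto simp: fun_eq_iff\<close>)
  also have "\<dots> = Some (cf(a := [], b := tower k m s @ cf b))"
    by (rule trans, rule run_flip_OF_clear[where k="Suc k"])
       (use P Suc in \<open>auto simp: accepts_Suc fun_eq_iff tower_Suc\<close>)
  finally show ?thesis .
qed

fun flip_FF_clear :: "nat \<Rightarrow> nat \<Rightarrow> nat \<Rightarrow> nat \<Rightarrow> (nat \<times> nat) list" where
  "flip_FF_clear 0 a b c = []"
| "flip_FF_clear (Suc m) a b c = flip_FF m a c b @ (a, b) # keep_SF_clear m c b a"

lemma run_flip_FF_clear:
  assumes "distinct_posts a b c" "cf a = tower k m s" "cf b = []" "cf c = []"
  shows "run cf (flip_FF_clear m a b c) = Some (cf(a := [], b := tower k m (\<not> s)))"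
proof (cases m)
  case 0
  then show ?thesis using assms by (simp add: fun_upd_idem)
next
  case (Suc j)
  note P = assms
  let ?T' = "tower (Suc k) j (\<not> s)"
  have "run cf (flip_FF_clear m a b c) = run cf (flip_FF j a c b @ (a, b) # keep_SF_clear j c b a)"
    using Suc by simp
  also have "\<dots> = run (cf(a := [(Suc k, s)], c := ?T')) ((a, b) # keep_SF_clear j c b a)"
    by (rule run_appendI, rule run_flip_FF[where k="Suc k" and LA="[(Suc k, s)]"])
       (use P Suc in \<open>auto simp: tower_Suc\<close>)
  also have "\<dots> = run (cf(a := [], b := [(Suc k, \<not> s)], c := ?T')) (keep_SF_clear j c b a)"
    by (rule run_move[where k=k]) (use P in \<open>auto simp: fun_upd_twist\<close>)
  also have "\<dots> = Some (cf(a := [], b := tower k m (\<not> s)))"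
    by (rule trans, rule run_keep_SF_clear[where k="Suc k"])
       (use P Suc in \<open>auto simp: fun_eq_iff tower_Suc\<close>)
  finally show ?thesis .
qed

lemma initial_config_eq: "initial_config N = (\<lambda>p. if p = 0 then tower 0 N True else [])"
  by (simp add: initial_config_def tower_def fun_eq_iff)

lemma solves_in_flip_FF_clear:
  assumes "D \<in> {1, 2}"
  shows "solves_in N D (length (flip_FF_clear N 0 D (3 - D)))"
proof -
  let ?c = "initial_config N"
  have "run ?c (flip_FF_clear N 0 D (3 - D)) = Some (?c(0 := [], D := tower 0 N (\<not> True)))"
    by (rule run_flip_FF_clear) (use assms in \<open>auto simp: initial_config_eq\<close>)
  moreover have "solved N D (?c(0 := [], D := tower 0 N (\<not> True)))"
    using assms by (auto simp: solved_def initial_config_eq tower_def comp_def)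
  ultimately show ?thesis
    unfolding solves_in_def by blast
qed

section \<open>Move counts\<close>

lemma length_keep_SO: "real (length (keep_SO m a b c)) = 3 ^ m - 1"
  by (induction m arbitrary: a b c) simp_all

lemma length_flip_OO: "real (length (flip_OO m a b c)) = S100 m"
  by (induction m arbitrary: a b c) (simp_all add: S100_def length_keep_SO field_simps)

lemma length_flip_OS: "real (length (flip_OS m a b c)) = S100 m"
  by (induction m arbitrary: a b c) (simp_all add: S100_def length_keep_SO field_simps)

lemma length_keep_SO_clear: "real (length (keep_SO_clear (Suc m) a b c)) = 2 * 3 ^ m"
  by (simp add: length_keep_SO length_flip_OO length_flip_OS S100_def field_simps)

lemma length_keep_FO: "real (length (keep_FO (Suc m) a b c)) = 2 * 3 ^ m"
  by (simp add: length_keep_SO length_flip_OO length_flip_OS S100_def field_simps)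

lemma length_flip_FF: "real (length (flip_FF m a b c)) = S67 m"
proof (induction m arbitrary: a b c)
  case (Suc m)
  note IH = Suc.IH
  show ?case
  proof (cases m)
    case (Suc j)
    then show ?thesis
      using IH[of a c b] length_keep_SO_clear[of j c b a]
      by (simp add: S67_def del: keep_SO_clear.simps)
  qed (simp add: S67_def)
qed (simp add: S67_def)

lemma length_flip_OF_clear: "real (length (flip_OF_clear m a b c)) = S67 m"
proof (induction m arbitrary: a b c)
  case (Suc m)
  note IH = Suc.IH
  show ?case
  proof (cases m)
    case (Suc j)
    then show ?thesis
      using IH[of c b a] length_keep_FO[of j a c b]
      by (simp add: S67_def del: keep_FO.simps)
  qed (simp add: S67_def)
qed (simp add: S67_def)

lemma SSF_Suc_Suc: "m \<ge> 1 \<Longrightarrow> SSF (m + 2) = SSF m + 3 ^ (m + 1) + 1"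
  by (cases m) (auto simp: SSF_def field_simps)

lemma length_flip_OF: "m \<ge> 1 \<Longrightarrow> real (length (flip_OF m a b c)) = SSF m"
proof (induction m rule: nat_induct2)
  case (step m)
  have "real (length (flip_OF (m + 2) a b c)) = real (length (flip_OF m a b c)) + 3 ^ (m + 1) + 1"
    using length_keep_SO[of m b c a] length_keep_SO_clear[of m c b a]
    by (simp del: keep_SO_clear.simps)
  then show ?case
    using step SSF_Suc_Suc[of m] by (cases "m = 0") (simp_all add: SSF_def)
qed (simp_all add: SSF_def)

lemma length_flip_FF_clear:
  assumes "N \<ge> 1"
  shows "real (length (flip_FF_clear N a b c)) = S62 N"
proof (cases "N \<le> 3")
  case True
  with assms have "N = 1 \<or> N = 2 \<or> N = 3" by auto
  then show ?thesis by (elim disjE) (simp_all add: S62_def numeral_eq_Suc)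
next
  case False
  then have "\<exists>j. N = Suc (Suc (Suc (Suc j)))" by presburger
  then obtain j where N: "N = Suc (Suc (Suc (Suc j)))" ..
  then have "real (length (flip_FF_clear N a b c))
      = S67 (N - 1) + (3 ^ Suc (Suc j) - 1) + real (length (flip_OF (Suc j) b a c))
        + (3 ^ Suc j - 1) + S67 (N - 2) + 4"
    by (simp add: length_flip_FF length_keep_SO length_flip_OF_clear
        del: flip_FF.simps keep_SO.simps flip_OF.simps flip_OF_clear.simps)
  then show ?thesis
    using N length_flip_OF[of "Suc j" b a c]
    by (simp add: S62_def S100_def diff_divide_distrib del: flip_FF_clear.simps flip_OF.simps)
qed

section \<open>Growth of S62\<close>

lemma S62_approx: "\<bar>S62 (j + 4) - 201 / 8 * 3 ^ j\<bar> \<le> 3 * real j + 6"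
proof -
  have "S62 (j + 4) - 201 / 8 * 3 ^ j = 5 / 2 * real j + 5 + (if even j then - 1 / 8 else 1 / 8)"
    by (simp add: S62_def S100_def S67_def SSF_def power_add field_simps)
  then show ?thesis by simp
qed

lemma S62_ratio_tendsto: "(\<lambda>N. S62 N / ((3 ^ N - 1) / 2)) \<longlonglongrightarrow> 67 / 108"
proof (rule LIMSEQ_offset[where k = 4])
  define err where "err j = (S62 (j + 4) - 201 / 8 * 3 ^ j) / 3 ^ j" for j :: nat
  have "(\<lambda>j. (3 * real j + 6) / 3 ^ j) \<longlonglongrightarrow> 0"
    by real_asymp
  moreover have "\<forall>\<^sub>F j in sequentially. norm (err j) \<le> norm ((3 * real j + 6) / 3 ^ j) * 1"
    using S62_approx by (intro always_eventually allI) (simp add: err_def abs_divide divide_right_mono)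
  ultimately have "err \<longlonglongrightarrow> 0"
    by (rule tendsto_0_le)
  moreover have "(\<lambda>j. 1 / 3 ^ j :: real) \<longlonglongrightarrow> 0"
    by real_asymp
  ultimately have "(\<lambda>j. 2 * (201 / 8 + err j) / (81 - 1 / 3 ^ j)) \<longlonglongrightarrow> 2 * (201 / 8 + 0) / (81 - 0)"
    by (intro tendsto_intros) auto
  moreover have "S62 (j + 4) / ((3 ^ (j + 4) - 1) / 2) = 2 * (201 / 8 + err j) / (81 - 1 / 3 ^ j)" for j
    by (simp add: err_def power_add field_simps)
  ultimately show "(\<lambda>j. S62 (j + 4) / ((3 ^ (j + 4) - 1) / 2)) \<longlonglongrightarrow> 67 / 108"
    by simp
qed

theorem mainTheorem4:
  shows "(\<forall>N \<ge> 1. \<forall>D \<in> {1, 2}. \<exists>k. real k = S62 N \<and> solves_in N D k) \<and>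
         (\<lambda>N. S62 N / ((3 ^ N - 1) / 2)) \<longlonglongrightarrow> 67 / 108"
  using length_flip_FF_clear solves_in_flip_FF_clear S62_ratio_tendsto by blast

end
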